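(* If $G$ is a trigraph with $\operatorname{stww}(G)>\Delta(G)^2$, then $\operatorname{stww}(G)=\operatorname{tww}(G)$.
   Context: A trigraph is a finite simple graph whose edges are each colored red or black; a graph is viewed as a trigraph with all edges black. $\Delta(G)$ denotes the maximum degree of the underlying graph (edges of both colors counted). The red degree of a vertex is the number of red edges incident to it. For a partition $\mathcal{P}$ of $V(G)$, the quotient trigraph $G/\mathcal{P}$ has vertex set $\mathcal{P}$; two distinct parts $U,W$ are joined by a black edge if every pair $\{u,w\}$ with $u\in U,w\in W$ is a black edge of $G$, are non-adjacent if no such pair is an edge, and are joined by a red edge otherwise. A contraction sequence of an $n$-vertex trigraph $G$ is a sequence $\mathcal{P}_n,\dots,\mathcal{P}_1$ of partitions of $V(G)$ where $\mathcal{P}_n$ is the partition into singletons and each $\mathcal{P}_i$ arises from $\mathcal{P}_{i+1}$ by merging two parts; its width is the maximum red degree over all $G/\mathcal{P}_i$, and $\operatorname{tww}(G)$ is the minimum width of a contraction sequence. The sparse twin-width is $\operatorname{stww}(G)\coloneqq\operatorname{tww}(G_{\mathrm{red}})$, where $G_{\mathrm{red}}$ is obtained from $G$ by coloring all edges red. *)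

theory Defs
  imports Main
begin

text \<open>A trigraph is given by a finite vertex set V, a set E of edges (2-element
subsets of V, of either colour) and the set R \<subseteq> E of red edges; the black
edges are E - R. A graph is a trigraph with R = {}.\<close>

definition trigraph :: "'a set \<Rightarrow> 'a set set \<Rightarrow> 'a set set \<Rightarrow> bool" where
  "trigraph V E R \<longleftrightarrow> finite V \<and>
     (\<forall>e\<in>E. \<exists>u v. u \<in> V \<and> v \<in> V \<and> u \<noteq> v \<and> e = {u, v}) \<and> R \<subseteq> E"

definition maxdeg :: "'a set \<Rightarrow> 'a set set \<Rightarrow> nat" where
  "maxdeg V E = Max (insert 0 ((\<lambda>v. card {e \<in> E. v \<in> e}) ` V))"

definition qblack :: "'a set set \<Rightarrow> 'a set set \<Rightarrow> 'a set \<Rightarrow> 'a set \<Rightarrow> bool" where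
  "qblack E R U W \<longleftrightarrow> (\<forall>u\<in>U. \<forall>w\<in>W. {u, w} \<in> E - R)"

definition qnonadj :: "'a set set \<Rightarrow> 'a set \<Rightarrow> 'a set \<Rightarrow> bool" where
  "qnonadj E U W \<longleftrightarrow> (\<forall>u\<in>U. \<forall>w\<in>W. {u, w} \<notin> E)"

definition qred :: "'a set set \<Rightarrow> 'a set set \<Rightarrow> 'a set \<Rightarrow> 'a set \<Rightarrow> bool" where
  "qred E R U W \<longleftrightarrow> \<not> qblack E R U W \<and> \<not> qnonadj E U W"

definition red_degree :: "'a set set \<Rightarrow> 'a set set \<Rightarrow> 'a set set \<Rightarrow> 'a set \<Rightarrow> nat" where
  "red_degree E R P U = card {W \<in> P. W \<noteq> U \<and> qred E R U W}"

text \<open>A contraction sequence P_n, ..., P_1 (n = |V|) is represented by a function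
s :: nat => partition, with s n the singleton partition and s i obtained from
s (i+1) by merging two distinct parts, for 1 \<le> i < n.\<close>
definition contraction_seq :: "'a set \<Rightarrow> (nat \<Rightarrow> 'a set set) \<Rightarrow> bool" where
  "contraction_seq V s \<longleftrightarrow>
     s (card V) = (\<lambda>v. {v}) ` V \<and>
     (\<forall>i. 1 \<le> i \<and> i < card V \<longrightarrow>
        (\<exists>X\<in>s (Suc i). \<exists>Y\<in>s (Suc i). X \<noteq> Y \<and>
            s i = insert (X \<union> Y) (s (Suc i) - {X, Y})))"

definition width_le :: "'a set \<Rightarrow> 'a set set \<Rightarrow> 'a set set \<Rightarrow> (nat \<Rightarrow> 'a set set) \<Rightarrow> nat \<Rightarrow> bool" where
  "width_le V E R s d \<longleftrightarrow>
     (\<forall>i\<in>{1..card V}. \<forall>U\<in>s i. red_degree E R (s i) U \<le> d)"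

definition tww :: "'a set \<Rightarrow> 'a set set \<Rightarrow> 'a set set \<Rightarrow> nat" where
  "tww V E R = (LEAST d. \<exists>s. contraction_seq V s \<and> width_le V E R s d)"

definition stww :: "'a set \<Rightarrow> 'a set set \<Rightarrow> nat" where
  "stww V E = tww V E E"

end

theory Submission
  imports Defs "HOL-Library.Disjoint_Sets"
begin

text \<open>Colouring every edge red can only raise red degrees in a quotient G/P, and it
raises the red degree of a part U only if U has a black neighbour W. In that case U lies
in the neighbourhood of any vertex of W, so |U| \<le> \<Delta>, and the parts adjacent to U
number at most |U| \<Delta> \<le> \<Delta>^2. Hence a contraction sequence of width d
for G has width at most max d \<Delta>^2 for G_red, and
tww(G) \<le> stww(G) \<le> max (tww(G)) \<Delta>^2.\<close>

lemma Least_eq_if_equiv_above: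
  fixes c :: "'b::wellorder"
  assumes P_of_Q: "\<And>d. Q d \<Longrightarrow> P d"
    and Q_of_P: "\<And>d. P d \<Longrightarrow> Q (max d c)"
    and gap: "c < (LEAST d. Q d)"
  shows "(LEAST d. Q d) = (LEAST d. P d)"
proof (cases "\<exists>d. P d")
  case True
  then have "P (LEAST d. P d)" by (rule LeastI_ex)
  then have "(LEAST d. Q d) \<le> max (LEAST d. P d) c" by (rule Least_le[of Q, OF Q_of_P])
  moreover from True obtain d where "Q d" using Q_of_P by blast
  then have "P (LEAST d. Q d)" by (rule P_of_Q[OF LeastI[of Q]])
  then have "(LEAST d. P d) \<le> (LEAST d. Q d)" by (rule Least_le)
  ultimately show ?thesis using gap by (auto simp: max_def split: if_splits)
next
  case False
  then have "Q = P" using P_of_Q by (auto simp: fun_eq_iff)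
  then show ?thesis by simp
qed

lemma partition_on_merge:
  assumes P: "partition_on A P" and XY: "X \<in> P" "Y \<in> P"
  shows "partition_on A (insert (X \<union> Y) (P - {X, Y}))"
proof (rule partition_onI)
  show "\<Union>(insert (X \<union> Y) (P - {X, Y})) = A"
    using partition_onD1[OF P] XY by auto
  show "{} \<notin> insert (X \<union> Y) (P - {X, Y})"
    using partition_onD3[OF P] XY by auto
next
  have disj: "disjnt a b" if "a \<in> P" "b \<in> P" "a \<noteq> b" for a b
    using partition_onD2[OF P] that by (rule pairwiseD)
  fix p q
  assume "p \<in> insert (X \<union> Y) (P - {X, Y})" "q \<in> insert (X \<union> Y) (P - {X, Y})" "p \<noteq> q"
  then show "disjnt p q"
    using XY by (auto intro: disj)
qed

lemma contraction_seq_partition_on: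
  assumes seq: "contraction_seq V s" and i: "i \<in> {1..card V}"
  shows "partition_on V (s i)"
proof -
  from i have "1 \<le> i" "i \<le> card V" by auto
  from \<open>i \<le> card V\<close> show ?thesis
  proof (induction i rule: inc_induct)
    case base
    then show ?case using seq partition_on_singletons by (simp add: contraction_seq_def)
  next
    case (step n)
    with \<open>1 \<le> i\<close> have "1 \<le> n \<and> n < card V" by simp
    with seq have "\<exists>X\<in>s (Suc n). \<exists>Y\<in>s (Suc n). X \<noteq> Y \<and>
        s n = insert (X \<union> Y) (s (Suc n) - {X, Y})"
      unfolding contraction_seq_def by simp
    with step.IH show ?case by (auto simp: partition_on_merge)
  qed
qed

definition neighbours :: "'a set set \<Rightarrow> 'a \<Rightarrow> 'a set" where
  "neighbours E u = {x. {u, x} \<in> E}"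

lemma trigraph_finite_edges: "trigraph V E R \<Longrightarrow> finite E"
  unfolding trigraph_def by (auto intro: finite_subset[of E "Pow V"])

lemma neighbours_subset: "trigraph V E R \<Longrightarrow> neighbours E u \<subseteq> V"
  unfolding trigraph_def neighbours_def by (fastforce simp: doubleton_eq_iff)

lemma card_neighbours_le_maxdeg:
  assumes G: "trigraph V E R" and u: "u \<in> V"
  shows "card (neighbours E u) \<le> maxdeg V E"
proof -
  have "card (neighbours E u) \<le> card {e \<in> E. u \<in> e}"
    by (rule card_inj_on_le[where f = "\<lambda>x. {u, x}"])
      (auto simp: inj_on_def doubleton_eq_iff neighbours_def trigraph_finite_edges[OF G])
  also have "\<dots> \<le> maxdeg V E"
    using G u unfolding maxdeg_def trigraph_def by (intro Max_ge) auto
  finally show ?thesis .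
qed

lemma card_le_maxdeg_if_qblack:
  assumes G: "trigraph V E R" and "qblack E R U W" and w: "w \<in> W" "w \<in> V"
  shows "card U \<le> maxdeg V E"
proof -
  have "U \<subseteq> neighbours E w"
    using assms unfolding qblack_def neighbours_def by (auto simp: insert_commute)
  moreover have "finite (neighbours E w)"
    using G neighbours_subset trigraph_def finite_subset by metis
  ultimately have "card U \<le> card (neighbours E w)" by (rule card_mono[rotated])
  also have "\<dots> \<le> maxdeg V E" using G w(2) by (rule card_neighbours_le_maxdeg)
  finally show ?thesis .
qed

lemma card_parts_meeting_le:
  assumes P: "disjoint P" and S: "finite S"
  shows "card {W \<in> P. W \<inter> S \<noteq> {}} \<le> card S"
proof -
  define pick where "pick W = (SOME x. x \<in> W \<inter> S)" for W :: "'a set"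
  have pick: "pick W \<in> W \<inter> S" if "W \<inter> S \<noteq> {}" for W
    unfolding pick_def using that some_in_eq by metis
  have "inj_on pick {W \<in> P. W \<inter> S \<noteq> {}}"
  proof (rule inj_onI)
    fix W W' assume W: "W \<in> {W \<in> P. W \<inter> S \<noteq> {}}" and W': "W' \<in> {W \<in> P. W \<inter> S \<noteq> {}}"
      and "pick W = pick W'"
    then have "W \<inter> W' \<noteq> {}" using pick[of W] pick[of W'] by auto
    with W W' show "W = W'" using disjointD[OF P] by blast
  qed
  moreover have "pick ` {W \<in> P. W \<inter> S \<noteq> {}} \<subseteq> S" using pick by blast
  ultimately show ?thesis using S by (rule card_inj_on_le)
qed

lemma red_degree_le_card_mul_maxdeg:
  assumes G: "trigraph V E R" and P: "partition_on V P" and U: "U \<in> P"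
  shows "red_degree E R' P U \<le> card U * maxdeg V E"
proof -
  have finV: "finite V" and UV: "U \<subseteq> V"
    using G P U partition_onD1 unfolding trigraph_def by auto
  then have finU: "finite U" by (rule finite_subset[rotated])
  define N where "N = (\<Union>u\<in>U. neighbours E u)"
  have finN: "finite N"
    unfolding N_def using neighbours_subset[OF G] finV by (blast intro: finite_subset)
  have "{W \<in> P. W \<noteq> U \<and> qred E R' U W} \<subseteq> {W \<in> P. W \<inter> N \<noteq> {}}"
    unfolding qred_def qnonadj_def N_def neighbours_def by blast
  then have "red_degree E R' P U \<le> card {W \<in> P. W \<inter> N \<noteq> {}}"
    unfolding red_degree_def using finite_elements[OF finV P] by (intro card_mono) auto
  also have "\<dots> \<le> card N"
    using partition_onD2[OF P] finN by (rule card_parts_meeting_le)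
  also have "\<dots> \<le> (\<Sum>u\<in>U. card (neighbours E u))"
    unfolding N_def using finU by (rule card_UN_le)
  also have "\<dots> \<le> card U * maxdeg V E"
    using sum_bounded_above[of U "\<lambda>u. card (neighbours E u)" "maxdeg V E"]
      card_neighbours_le_maxdeg[OF G] UV by auto
  finally show ?thesis .
qed

lemma red_degree_le_red_degree_all_red:
  assumes "finite V" "partition_on V P"
  shows "red_degree E R P U \<le> red_degree E E P U"
proof -
  have "{W \<in> P. W \<noteq> U \<and> qred E R U W} \<subseteq> {W \<in> P. W \<noteq> U \<and> qred E E U W}"
    using partition_onD3[OF assms(2)] unfolding qred_def qblack_def qnonadj_def by blast
  then show ?thesis
    unfolding red_degree_def using finite_elements[OF assms] by (intro card_mono) auto
qed

lemma red_degree_all_red_le_max: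
  assumes G: "trigraph V E R" and P: "partition_on V P" and U: "U \<in> P"
  shows "red_degree E E P U \<le> max (red_degree E R P U) (maxdeg V E ^ 2)"
proof (cases "\<exists>W\<in>P. qblack E R U W")
  case True
  then obtain W where W: "W \<in> P" "qblack E R U W" by blast
  have "W \<noteq> {}" "W \<subseteq> V" using W(1) partition_onD1[OF P] partition_onD3[OF P] by auto
  then obtain w where "w \<in> W" "w \<in> V" by blast
  with G W(2) have "card U \<le> maxdeg V E" by (intro card_le_maxdeg_if_qblack)
  then have "red_degree E E P U \<le> maxdeg V E ^ 2"
    using red_degree_le_card_mul_maxdeg[OF G P U]
    by (metis power2_eq_square mult_le_mono1 le_trans)
  then show ?thesis by simp
next
  case False
  then have "{W \<in> P. W \<noteq> U \<and> qred E E U W} \<subseteq> {W \<in> P. W \<noteq> U \<and> qred E R U W}"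
    unfolding qred_def by blast
  moreover have "finite P" using G P finite_elements unfolding trigraph_def by blast
  ultimately have "red_degree E E P U \<le> red_degree E R P U"
    unfolding red_degree_def by (intro card_mono) auto
  then show ?thesis by simp
qed

lemma width_le_of_all_red:
  assumes G: "trigraph V E R" and seq: "contraction_seq V s" and width: "width_le V E E s d"
  shows "width_le V E R s d"
  unfolding width_le_def
proof (intro ballI)
  fix i U assume i: "i \<in> {1..card V}" and U: "U \<in> s i"
  have "finite V" using G unfolding trigraph_def by blast
  moreover have "partition_on V (s i)" using seq i by (rule contraction_seq_partition_on)
  ultimately have "red_degree E R (s i) U \<le> red_degree E E (s i) U"
    by (rule red_degree_le_red_degree_all_red)
  also have "\<dots> \<le> d" using width i U unfolding width_le_def by blast
  finally show "red_degree E R (s i) U \<le> d" .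
qed

lemma width_le_all_red_max:
  assumes G: "trigraph V E R" and seq: "contraction_seq V s" and width: "width_le V E R s d"
  shows "width_le V E E s (max d (maxdeg V E ^ 2))"
  unfolding width_le_def
proof (intro ballI)
  fix i U assume i: "i \<in> {1..card V}" and U: "U \<in> s i"
  have "partition_on V (s i)" using seq i by (rule contraction_seq_partition_on)
  then have "red_degree E E (s i) U \<le> max (red_degree E R (s i) U) (maxdeg V E ^ 2)"
    using G U by (intro red_degree_all_red_le_max)
  also have "\<dots> \<le> max d (maxdeg V E ^ 2)"
    using width i U unfolding width_le_def by (intro max.mono) auto
  finally show "red_degree E E (s i) U \<le> max d (maxdeg V E ^ 2)" .
qed

theorem mainTheorem10:
  fixes V :: "'a set" and E R :: "'a set set"
  assumes "trigraph V E R"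
    and "stww V E > (maxdeg V E)^2"
  shows "stww V E = tww V E R"
  unfolding stww_def tww_def
proof (rule Least_eq_if_equiv_above[where c = "maxdeg V E ^ 2"])
  fix d
  assume "\<exists>s. contraction_seq V s \<and> width_le V E E s d"
  then show "\<exists>s. contraction_seq V s \<and> width_le V E R s d"
    using width_le_of_all_red[OF assms(1)] by blast
next
  fix d
  assume "\<exists>s. contraction_seq V s \<and> width_le V E R s d"
  then show "\<exists>s. contraction_seq V s \<and> width_le V E E s (max d (maxdeg V E ^ 2))"
    using width_le_all_red_max[OF assms(1)] by blast
next
  show "maxdeg V E ^ 2 < (LEAST d. \<exists>s. contraction_seq V s \<and> width_le V E E s d)"
    using assms(2) unfolding stww_def tww_def .
qed

end
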